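(* Let $a<b$ and let $X$ be a random variable taking values in $[a,b]$, with probability density function $f:[a,b]\rightarrow[0,1]$ and cumulative distribution function $F(x)=\Pr(X\le x)=\int_a^x f(t)\,dt$. Assume that $F$ is differentiable in $(a,b)$ with $F'=f\in L^1[a,b]$ and that $\gamma\le f(t)\le\Gamma$ for all $t\in[a,b]$, where $\gamma,\Gamma$ are real constants. Then for all $x\in[a,\frac{a+b}{2}]$, \[ \left|\frac{1}{2}[F(x)+F(a+b-x)]-\frac{b-E(X)}{b-a}\right|\leq \left[\frac{b-a}{4}+\left|x-\frac{3a+b}{4}\right|\right] \left(\frac{1}{b-a}-\gamma\right) \] and \[ \left|\frac{1}{2}[F(x)+F(a+b-x)]-\frac{b-E(X)}{b-a}\right|\leq \left[\frac{b-a}{4}+\left|x-\frac{3a+b}{4}\right|\right] \left(\Gamma-\frac{1}{b-a}\right), \] where $E(X)$ is the expectation of $X$. *)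

theory Defs
  imports "HOL-Probability.Probability"
begin

end

theory Submission imports Defs begin

text \<open>
  Integrating the density against the Peano kernel
  \<open>P t = (1[a,x](t) + 1[a,a+b-x](t))/2 - (b - t)/(b - a)\<close> gives exactly the
  deviation \<open>(F x + F (a+b-x))/2 - (b - E X)/(b - a)\<close>, while \<open>P\<close> itself has integral 0.
  So the deviation equals \<open>\<integral> (f - c) P\<close> for every constant \<open>c\<close> and is at most
  \<open>sup |P| \<cdot> \<integral> |f - c|\<close>.  On \<open>[a,b]\<close> one has
  \<open>(b - a) |P| \<le> max (x - a) ((a+b)/2 - x)\<close>, which is the bracket of the theorem,
  and for \<open>c = \<gamma>\<close> resp. \<open>c = \<Gamma>\<close> the function \<open>f - c\<close> has constant sign, so
  \<open>\<integral> |f - c|\<close> is \<open>1 - \<gamma> (b - a)\<close> resp. \<open>\<Gamma> (b - a) - 1\<close>.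
\<close>

definition peano_kernel :: "real \<Rightarrow> real \<Rightarrow> real \<Rightarrow> real \<Rightarrow> real" where
  "peano_kernel a b x t = (indicator {a..x} t + indicator {a..a+b-x} t) / 2 - (b - t) / (b - a)"

lemma quarter_plus_abs_eq_max:
  fixes a b x :: real
  shows "(b - a)/4 + \<bar>x - (3*a + b)/4\<bar> = max (x - a) ((a + b)/2 - x)"
  by (simp add: abs_if max_def field_simps)

lemma abs_peano_kernel_le:
  fixes a b x t :: real
  assumes "a < b" "a \<le> x" "x \<le> (a + b)/2" "t \<in> {a..b}"
  shows "\<bar>peano_kernel a b x t\<bar> \<le> max (x - a) ((a + b)/2 - x) / (b - a)"
proof -
  have "\<bar>(b - a) * peano_kernel a b x t\<bar> \<le> max (x - a) ((a + b)/2 - x)"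
  proof -
    consider "t \<le> x" | "x < t" "t \<le> a + b - x" | "a + b - x < t" by linarith
    then show ?thesis
    proof cases
      case 1
      then have "(b - a) * peano_kernel a b x t = t - a"
        using assms by (simp add: peano_kernel_def field_simps)
      moreover have "\<bar>t - a\<bar> \<le> x - a"
        using 1 assms by simp
      ultimately show ?thesis by (simp add: le_max_iff_disj)
    next
      case 2
      then have "(b - a) * peano_kernel a b x t = t - (a + b)/2"
        using assms by (simp add: peano_kernel_def field_simps)
      moreover have "\<bar>t - (a + b)/2\<bar> \<le> (a + b)/2 - x"
        using 2 by (simp add: abs_le_iff field_simps)
      ultimately show ?thesis by (simp add: le_max_iff_disj)
    next
      case 3
      then have "(b - a) * peano_kernel a b x t = t - b"
        using assms by (simp add: peano_kernel_def field_simps)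
      moreover have "\<bar>t - b\<bar> \<le> x - a"
        using 3 assms by simp
      ultimately show ?thesis by (simp add: le_max_iff_disj)
    qed
  qed
  then show ?thesis
    using assms(1) by (simp add: abs_mult pos_le_divide_eq mult.commute)
qed

lemma has_integral_mult_peano_kernel:
  fixes g :: "real \<Rightarrow> real" and a b x I J L :: real
  assumes "a < b" "a \<le> x" "x \<le> b"
    and I: "(g has_integral I) {a..x}" and J: "(g has_integral J) {a..a+b-x}"
    and L: "((\<lambda>t. g t * (b - t)) has_integral L) {a..b}"
  shows "((\<lambda>t. g t * peano_kernel a b x t) has_integral (I + J)/2 - L/(b - a)) {a..b}"
proof -
  have "((\<lambda>t. if t \<in> {a..x} then g t else 0) has_integral I) {a..b}"
    using I assms(3) by (subst has_integral_restrict) auto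
  moreover have "((\<lambda>t. if t \<in> {a..a+b-x} then g t else 0) has_integral J) {a..b}"
    using J assms(2) by (subst has_integral_restrict) auto
  ultimately have "((\<lambda>t. (if t \<in> {a..x} then g t else 0) / 2
        + (if t \<in> {a..a+b-x} then g t else 0) / 2 - g t * (b - t) / (b - a))
      has_integral I/2 + J/2 - L/(b - a)) {a..b}"
    using L by (intro has_integral_diff has_integral_add has_integral_divide)
  moreover have "(if t \<in> {a..x} then g t else 0) / 2
        + (if t \<in> {a..a+b-x} then g t else 0) / 2 - g t * (b - t) / (b - a)
      = g t * peano_kernel a b x t" for t
    by (simp add: peano_kernel_def indicator_def algebra_simps add_divide_distrib)
  ultimately show ?thesis
    by (simp add: add_divide_distrib)
qed

lemma peano_kernel_has_integral_0:
  fixes a b x :: real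
  assumes "a < b" "a \<le> x" "x \<le> b"
  shows "(peano_kernel a b x has_integral 0) {a..b}"
proof -
  have I: "((\<lambda>t. 1) has_integral x - a) {a..x}"
    using has_integral_const_real[of "1::real" a x] assms by simp
  have J: "((\<lambda>t. 1) has_integral b - x) {a..a+b-x}"
    using has_integral_const_real[of "1::real" a "a+b-x"] assms by simp
  have "((\<lambda>t. b - t) has_integral b * (b - a) - (b\<^sup>2 - a\<^sup>2)/2) {a..b}"
    using has_integral_const_real[of b a b] ident_has_integral[of a b] assms
    by (intro has_integral_diff) (simp_all add: mult.commute)
  moreover have "b * (b - a) - (b\<^sup>2 - a\<^sup>2)/2 = (b - a)\<^sup>2/2"
    by (simp add: power2_eq_square field_simps)
  ultimately have L: "((\<lambda>t. 1 * (b - t)) has_integral (b - a)\<^sup>2/2) {a..b}"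
    by simp
  have total: "((x - a) + (b - x))/2 - (b - a)\<^sup>2/2/(b - a) = 0"
    using assms(1) by (simp add: power2_eq_square field_simps)
  show ?thesis
    using has_integral_mult_peano_kernel[OF assms I J L] unfolding total by simp
qed

lemma abs_symmetric_cdf_deviation_le:
  fixes f :: "real \<Rightarrow> real" and a b x c A E :: real
  assumes "a < b" "a \<le> x" "x \<le> (a + b)/2"
    and mass: "(f has_integral 1) {a..b}"
    and mean: "((\<lambda>t. f t * t) has_integral E) {a..b}"
    and deviation: "((\<lambda>t. \<bar>f t - c\<bar>) has_integral A) {a..b}"
  shows "\<bar>(integral {a..x} f + integral {a..a+b-x} f)/2 - (b - E)/(b - a)\<bar>
           \<le> ((b - a)/4 + \<bar>x - (3*a + b)/4\<bar>) / (b - a) * A"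
proof -
  define D where "D = (integral {a..x} f + integral {a..a+b-x} f)/2 - (b - E)/(b - a)"
  define K where "K = max (x - a) ((a + b)/2 - x) / (b - a)"
  have "x \<le> b" using assms(1,3) by simp
  have f_int: "f integrable_on {a..b}"
    using mass by blast
  have I: "(f has_integral integral {a..x} f) {a..x}"
    using integrable_on_subinterval[OF f_int] \<open>x \<le> b\<close> by auto
  have J: "(f has_integral integral {a..a+b-x} f) {a..a+b-x}"
    using integrable_on_subinterval[OF f_int] assms(2,3) by auto
  have "((\<lambda>t. f t * b - f t * t) has_integral 1 * b - E) {a..b}"
    using mass mean by (intro has_integral_diff has_integral_mult_left)
  then have L: "((\<lambda>t. f t * (b - t)) has_integral b - E) {a..b}"
    by (simp add: right_diff_distrib)
  have "((\<lambda>t. f t * peano_kernel a b x t - c * peano_kernel a b x t) has_integral D - c * 0) {a..b}"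
    using has_integral_mult_peano_kernel[OF assms(1,2) \<open>x \<le> b\<close> I J L]
      peano_kernel_has_integral_0[OF assms(1,2) \<open>x \<le> b\<close>]
    unfolding D_def by (intro has_integral_diff has_integral_mult_right)
  then have DP: "((\<lambda>t. (f t - c) * peano_kernel a b x t) has_integral D) {a..b}"
    by (simp add: left_diff_distrib)
  have AK: "((\<lambda>t. \<bar>f t - c\<bar> * K) has_integral A * K) {a..b}"
    using deviation by (rule has_integral_mult_left)
  have "\<bar>D\<bar> \<le> A * K"
  proof -
    have "norm (integral {a..b} (\<lambda>t. (f t - c) * peano_kernel a b x t))
        \<le> integral {a..b} (\<lambda>t. \<bar>f t - c\<bar> * K)"
    proof (rule integral_norm_bound_integral)
      fix t assume "t \<in> {a..b}"
      then have "\<bar>peano_kernel a b x t\<bar> \<le> K"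
        unfolding K_def using abs_peano_kernel_le assms(1-3) by blast
      then show "norm ((f t - c) * peano_kernel a b x t) \<le> \<bar>f t - c\<bar> * K"
        by (simp add: abs_mult mult_left_mono)
    qed (use DP AK in blast)+
    then show ?thesis
      using integral_unique[OF DP] integral_unique[OF deviation] by simp
  qed
  then show ?thesis
    unfolding D_def K_def quarter_plus_abs_eq_max by (simp add: mult.commute)
qed

lemma distributed_has_integral_expectation:
  fixes X :: "'s \<Rightarrow> real" and f g :: "real \<Rightarrow> real" and a b B :: real
  assumes density: "distributed M lborel X (\<lambda>t. ennreal (indicator {a..b} t * f t))"
    and f_nonneg: "\<forall>t\<in>{a..b}. 0 \<le> f t"
    and f_L1: "set_integrable lborel {a..b} f"
    and g_measurable: "g \<in> borel_measurable borel"
    and g_bounded: "\<forall>t\<in>{a..b}. \<bar>g t\<bar> \<le> B"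
  shows "((\<lambda>t. f t * g t) has_integral (\<integral>\<omega>. g (X \<omega>) \<partial>M)) {a..b}"
proof -
  have fg_L1: "set_integrable lborel {a..b} (\<lambda>t. f t * g t)"
  proof (rule set_integrable_bound[where f = "\<lambda>t. B * f t"])
    show "set_integrable lborel {a..b} (\<lambda>t. B * f t)"
      using f_L1 by simp
    have "(\<lambda>t. indicator {a..b} t * f t) \<in> borel_measurable borel"
      using f_L1 unfolding set_integrable_def by (simp add: borel_measurable_integrable)
    then have "(\<lambda>t. indicator {a..b} t * f t * g t) \<in> borel_measurable borel"
      using g_measurable by (rule borel_measurable_times)
    then show "set_borel_measurable lborel {a..b} (\<lambda>t. f t * g t)"
      unfolding set_borel_measurable_def by (simp add: mult.assoc)
    show "AE t in lborel. t \<in> {a..b} \<longrightarrow> norm (f t * g t) \<le> norm (B * f t)"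
    proof (intro AE_I2 impI)
      fix t assume "t \<in> {a..b}"
      with f_nonneg g_bounded have "\<bar>g t\<bar> * f t \<le> \<bar>B\<bar> * f t"
        by (intro mult_right_mono) force+
      with \<open>t \<in> {a..b}\<close> f_nonneg show "norm (f t * g t) \<le> norm (B * f t)"
        by (simp add: abs_mult mult.commute)
    qed
  qed
  have "(\<integral>\<omega>. g (X \<omega>) \<partial>M) = (\<integral>t. indicator {a..b} t * f t * g t \<partial>lborel)"
  proof (rule distributed_integral[OF density, symmetric])
    show "g \<in> borel_measurable lborel"
      using g_measurable by simp
    show "0 \<le> indicator {a..b} t * f t" for t
      using f_nonneg by (simp add: indicator_def)
  qed
  also have "\<dots> = (LINT t:{a..b}|lborel. f t * g t)"
    by (simp add: set_lebesgue_integral_def mult.assoc)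
  also have "\<dots> = integral {a..b} (\<lambda>t. f t * g t)"
    by (rule set_borel_integral_eq_integral(2)[OF fg_L1])
  finally show ?thesis
    using integrable_integral[OF set_borel_integral_eq_integral(1)[OF fg_L1]] by simp
qed

theorem theorem4p1:
  fixes M :: "'s measure" and X :: "'s \<Rightarrow> real"
    and f F :: "real \<Rightarrow> real" and a b \<gamma> \<Gamma> x :: real
  assumes "prob_space M"
    and "a < b"
    and X_range: "\<forall>\<omega>\<in>space M. X \<omega> \<in> {a..b}"
    and density: "distributed M lborel X (\<lambda>t. ennreal (indicator {a..b} t * f t))"
    and f_range: "\<forall>t\<in>{a..b}. f t \<in> {0..1}"
    and F_cdf: "\<forall>y. F y = measure M {\<omega> \<in> space M. X \<omega> \<le> y}"
    and F_int: "\<forall>y\<in>{a..b}. F y = integral {a..y} f"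
    and F_deriv: "\<forall>t\<in>{a<..<b}. (F has_real_derivative f t) (at t)"
    and f_L1: "set_integrable lborel {a..b} f"
    and bounds: "\<forall>t\<in>{a..b}. \<gamma> \<le> f t \<and> f t \<le> \<Gamma>"
    and x: "x \<in> {a..(a+b)/2}"
  shows "\<bar>(F x + F (a+b-x))/2 - (b - prob_space.expectation M X)/(b-a)\<bar>
           \<le> ((b-a)/4 + \<bar>x - (3*a+b)/4\<bar>) * (1/(b-a) - \<gamma>)
         \<and> \<bar>(F x + F (a+b-x))/2 - (b - prob_space.expectation M X)/(b-a)\<bar>
           \<le> ((b-a)/4 + \<bar>x - (3*a+b)/4\<bar>) * (\<Gamma> - 1/(b-a))"
proof -
  interpret prob_space M by fact
  \<comment> \<open>Mass and mean of \<open>f\<close> come from the density.\<close>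
  have x_bounds: "a \<le> x" "x \<le> (a + b)/2" using x by auto
  have f_nonneg: "\<forall>t\<in>{a..b}. 0 \<le> f t" using f_range by auto
  have mass: "(f has_integral 1) {a..b}"
    using distributed_has_integral_expectation[OF density f_nonneg f_L1, of "\<lambda>_. 1" 1] prob_space
    by simp
  have mean: "((\<lambda>t. f t * t) has_integral expectation X) {a..b}"
  proof (rule distributed_has_integral_expectation[OF density f_nonneg f_L1])
    show "\<forall>t\<in>{a..b}. \<bar>t\<bar> \<le> \<bar>a\<bar> + \<bar>b\<bar>" by auto
  qed simp
  have const: "((\<lambda>t. c) has_integral c * (b - a)) {a..b}" for c
    using has_integral_const_real[of c a b] \<open>a < b\<close> by (simp add: mult.commute)
  have below: "((\<lambda>t. \<bar>f t - \<gamma>\<bar>) has_integral 1 - \<gamma> * (b - a)) {a..b}"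
    by (rule has_integral_eq[OF _ has_integral_diff[OF mass const]]) (use bounds in auto)
  have above: "((\<lambda>t. \<bar>f t - \<Gamma>\<bar>) has_integral \<Gamma> * (b - a) - 1) {a..b}"
    by (rule has_integral_eq[OF _ has_integral_diff[OF const mass]]) (use bounds in auto)
  have F: "F x = integral {a..x} f" "F (a+b-x) = integral {a..a+b-x} f"
    using F_int x by auto
  let ?K = "(b - a)/4 + \<bar>x - (3*a + b)/4\<bar>"
  have "?K / (b - a) * (1 - \<gamma> * (b - a)) = ?K * (1/(b - a) - \<gamma>)"
    and "?K / (b - a) * (\<Gamma> * (b - a) - 1) = ?K * (\<Gamma> - 1/(b - a))"
    using \<open>a < b\<close> by (simp_all add: field_simps)
  then show ?thesis
    using abs_symmetric_cdf_deviation_le[OF \<open>a < b\<close> x_bounds mass mean below]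
      abs_symmetric_cdf_deviation_le[OF \<open>a < b\<close> x_bounds mass mean above]
    unfolding F by simp
qed

end
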